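(* For every $i\geq0$ we have $$\frac{\sqrt\Delta}{c_{i+1}}\left(1-\frac1{c_ic_{i+1}}\right)<N_i<\frac{\sqrt\Delta}{c_{i+1}},$$ and in particular $\frac{N_i}{\sqrt\Delta}<\frac1{u_{i+1}}$, and $\frac1{u_{i+1}+10}<\frac{N_i}{\sqrt\Delta}$ whenever $u_{i+1}\geq3$.
   Context: $D>1$ squarefree, $K=\mathbb{Q}(\sqrt D)$, $\Delta$ its discriminant, $\alpha'$ the conjugate of $\alpha$ and $N(\alpha)=\alpha\alpha'$. $\omega_D=\sqrt D$ if $D\equiv2,3\pmod4$, $\omega_D=\frac{1+\sqrt D}2$ if $D\equiv1\pmod4$, with continued fraction $\omega_D=[u_0;u_1,u_2,\dots]$. Let $p_{-1}=1,q_{-1}=0,p_0=u_0,q_0=1$, $p_{i+1}=u_{i+1}p_i+p_{i-1}$, $q_{i+1}=u_{i+1}q_i+q_{i-1}$, $\alpha_i=p_i-q_i\omega_D'$, $N_i=|N(\alpha_i)|$, and $c_i=[u_i;u_{i+1},u_{i+2},\dots]$ the complete quotients (so $c_0=\omega_D$). *)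

theory Defs
  imports Complex_Main "HOL-Computational_Algebra.Squarefree"
begin

definition omegaD :: "int \<Rightarrow> real" where
  "omegaD D = (if D mod 4 = 1 then (1 + sqrt (real_of_int D)) / 2 else sqrt (real_of_int D))"

definition omegaD_conj :: "int \<Rightarrow> real" where
  "omegaD_conj D = (if D mod 4 = 1 then (1 - sqrt (real_of_int D)) / 2 else - sqrt (real_of_int D))"

definition disc :: "int \<Rightarrow> int" where
  "disc D = (if D mod 4 = 1 then D else 4 * D)"

fun cf_cq :: "real \<Rightarrow> nat \<Rightarrow> real" where
  "cf_cq x 0 = x"
| "cf_cq x (Suc n) = 1 / (cf_cq x n - of_int \<lfloor>cf_cq x n\<rfloor>)"

definition cf_u :: "real \<Rightarrow> nat \<Rightarrow> int" where
  "cf_u x n = \<lfloor>cf_cq x n\<rfloor>"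

text \<open>Convergent numerators/denominators, with p_{-1} = 1, q_{-1} = 0, p_0 = u_0, q_0 = 1.\<close>
fun cf_p :: "real \<Rightarrow> nat \<Rightarrow> int" where
  "cf_p x 0 = cf_u x 0"
| "cf_p x (Suc 0) = cf_u x 1 * cf_u x 0 + 1"
| "cf_p x (Suc (Suc n)) = cf_u x (Suc (Suc n)) * cf_p x (Suc n) + cf_p x n"

fun cf_q :: "real \<Rightarrow> nat \<Rightarrow> int" where
  "cf_q x 0 = 1"
| "cf_q x (Suc 0) = cf_u x 1"
| "cf_q x (Suc (Suc n)) = cf_u x (Suc (Suc n)) * cf_q x (Suc n) + cf_q x n"

text \<open>N_i = |N(alpha_i)| where alpha_i = p_i - q_i omega_D' and N(a) = a a'.\<close>
definition normN :: "int \<Rightarrow> nat \<Rightarrow> real" where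
  "normN D i = \<bar>(of_int (cf_p (omegaD D) i) - of_int (cf_q (omegaD D) i) * omegaD_conj D) *
                 (of_int (cf_p (omegaD D) i) - of_int (cf_q (omegaD D) i) * omegaD D)\<bar>"

end

theory Submission
  imports Defs
begin

text \<open>
  Let x > 1 be irrational with complete quotients c(k), let x' be any negative number and put
  s = x - x' and \<alpha> = p(i) - q(i) x. The classical identity \<alpha> d(i) = (-1)^(i+1), where
  d(i) = c(i+1) q(i) + q(i-1) = c(i+1) d(i-1), together with p(i) - q(i) x' = \<alpha> + q(i) s
  gives the exact value
    |\<alpha> (\<alpha> + q(i) s)| = s / c(i+1) - s q(i-1) / (c(i+1) d(i)) + (-1)^(i+1) / d(i)^2.
  Each of the two bounds then says that some numerator is positive; for one parity of i this
  is clear, for the other it follows from q(i-1) \<ge> 1, resp. q(i-2) \<ge> 1, and for i = 0 it is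
  just x < s. For x = \<omega>(D) and x' = \<omega>(D)' one has s = \<surd>\<Delta>.
\<close>

lemma cf_cq_Suc_eq: "cf_cq x (Suc n) = inverse (frac (cf_cq x n))"
  by (simp add: frac_def divide_inverse)

declare cf_cq.simps(2) [simp del]

lemma cf_cq_not_Rats: "x \<notin> \<rat> \<Longrightarrow> cf_cq x n \<notin> \<rat>"
  by (induction n) (simp_all add: cf_cq_Suc_eq)

lemma frac_cf_cq_pos:
  assumes "x \<notin> \<rat>" shows "0 < frac (cf_cq x n)"
proof -
  have "cf_cq x n \<notin> \<int>" using cf_cq_not_Rats[OF assms] Ints_subset_Rats by blast
  then show ?thesis using frac_ge_0 frac_eq_0_iff by (metis order_le_less)
qed

lemma cf_cq_gt_one:
  assumes "x \<notin> \<rat>" "1 < x" shows "1 < cf_cq x n"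
proof (cases n)
  case (Suc m)
  then show ?thesis using frac_cf_cq_pos[OF assms(1), of m] frac_lt_1[of "cf_cq x m"]
    by (simp add: cf_cq_Suc_eq one_less_inverse)
qed (use assms in simp)

lemma cf_cq_pos: "x \<notin> \<rat> \<Longrightarrow> 1 < x \<Longrightarrow> 0 < cf_cq x n"
  using cf_cq_gt_one[of x n] by simp

lemma cf_cq_eq: "cf_cq x n = of_int (cf_u x n) + 1 / cf_cq x (Suc n)"
  by (simp add: cf_cq_Suc_eq cf_u_def frac_def divide_inverse)

lemma cf_u_Suc_ge_one: "x \<notin> \<rat> \<Longrightarrow> 1 \<le> cf_u x (Suc n)"
  using frac_cf_cq_pos[of x n] frac_lt_1[of "cf_cq x n"]
  by (simp add: cf_u_def cf_cq_Suc_eq one_le_floor one_less_inverse less_imp_le)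

text \<open>Convergents with the index shifted by two, cf_P x k = p(k-2) and cf_Q x k = q(k-2),
  extended by p(-2) = 0 and q(-2) = 1, so that the recurrence holds from the start.\<close>

fun cf_P :: "real \<Rightarrow> nat \<Rightarrow> int" where
  "cf_P x 0 = 0"
| "cf_P x (Suc 0) = 1"
| "cf_P x (Suc (Suc n)) = cf_p x n"

fun cf_Q :: "real \<Rightarrow> nat \<Rightarrow> int" where
  "cf_Q x 0 = 1"
| "cf_Q x (Suc 0) = 0"
| "cf_Q x (Suc (Suc n)) = cf_q x n"

lemma cf_P_rec: "cf_P x (Suc (Suc k)) = cf_u x k * cf_P x (Suc k) + cf_P x k"
  by (cases "(x, k)" rule: cf_P.cases) simp_all

lemma cf_Q_rec: "cf_Q x (Suc (Suc k)) = cf_u x k * cf_Q x (Suc k) + cf_Q x k"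
  by (cases "(x, k)" rule: cf_Q.cases) simp_all

lemma cf_q_ge_one:
  assumes "x \<notin> \<rat>" shows "1 \<le> cf_q x n"
proof -
  have "1 \<le> cf_q x n \<and> 1 \<le> cf_q x (Suc n)"
  proof (induction n)
    case 0 show ?case using cf_u_Suc_ge_one[OF assms, of 0] by simp
  next
    case (Suc n)
    have "1 * cf_q x (Suc n) \<le> cf_u x (Suc (Suc n)) * cf_q x (Suc n)"
      using Suc cf_u_Suc_ge_one[OF assms, of "Suc n"] by (intro mult_right_mono) simp_all
    with Suc show ?case unfolding cf_q.simps(3) by linarith
  qed
  then show ?thesis ..
qed

lemma cf_Q_ge_one: "x \<notin> \<rat> \<Longrightarrow> k \<noteq> 1 \<Longrightarrow> 1 \<le> cf_Q x k"
  by (cases "(x, k)" rule: cf_Q.cases) (simp_all add: cf_q_ge_one)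

lemma cf_Q_nonneg: "x \<notin> \<rat> \<Longrightarrow> 0 \<le> cf_Q x k"
  by (cases "k = 1") (simp_all add: cf_Q_ge_one order.trans[OF zero_le_one])

lemma cf_P_Q_det: "cf_P x (Suc k) * cf_Q x k - cf_Q x (Suc k) * cf_P x k = (-1) ^ k"
proof (induction k)
  case (Suc k)
  have "cf_P x (Suc (Suc k)) * cf_Q x (Suc k) - cf_Q x (Suc (Suc k)) * cf_P x (Suc k)
      = - (cf_P x (Suc k) * cf_Q x k - cf_Q x (Suc k) * cf_P x k)"
    unfolding cf_P_rec cf_Q_rec by (simp add: algebra_simps)
  with Suc show ?case by simp
qed simp

definition cf_err :: "real \<Rightarrow> nat \<Rightarrow> real" where
  "cf_err x k = of_int (cf_P x k) - of_int (cf_Q x k) * x"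

text \<open>cf_den x (i+1) is the d(i) of the proof idea.\<close>

definition cf_den :: "real \<Rightarrow> nat \<Rightarrow> real" where
  "cf_den x k = of_int (cf_Q x k) + cf_cq x k * of_int (cf_Q x (Suc k))"

lemma cf_err_rec: "cf_err x (Suc (Suc k)) = of_int (cf_u x k) * cf_err x (Suc k) + cf_err x k"
  unfolding cf_err_def cf_P_rec cf_Q_rec by (simp add: algebra_simps)

lemma cf_err_eq:
  assumes "x \<notin> \<rat>" shows "cf_err x k = - cf_cq x k * cf_err x (Suc k)"
proof (induction k)
  case 0 show ?case by (simp add: cf_err_def)
next
  case (Suc k)
  have "cf_cq x (Suc k) \<noteq> 0"
    using frac_cf_cq_pos[OF assms, of k] by (simp add: cf_cq_Suc_eq)
  then show ?case
    using Suc cf_cq_eq[of x k] by (simp add: cf_err_rec field_simps)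
qed

lemma cf_err_mult_den:
  assumes "x \<notin> \<rat>" shows "cf_err x (Suc k) * cf_den x k = (-1) ^ k"
proof -
  have "cf_err x (Suc k) * cf_den x k
      = of_int (cf_Q x k) * cf_err x (Suc k) - of_int (cf_Q x (Suc k)) * cf_err x k"
    by (simp add: cf_den_def cf_err_eq[OF assms, of k] algebra_simps)
  also have "\<dots> = of_int (cf_P x (Suc k) * cf_Q x k - cf_Q x (Suc k) * cf_P x k)"
    by (simp add: cf_err_def algebra_simps)
  finally show ?thesis by (simp add: cf_P_Q_det)
qed

lemma cf_den_Suc:
  assumes "x \<notin> \<rat>" shows "cf_den x (Suc k) = cf_cq x (Suc k) * cf_den x k"
proof -
  have "cf_err x (Suc (Suc k)) * cf_den x (Suc k) = - (cf_err x (Suc k) * cf_den x k)"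
    by (simp add: cf_err_mult_den[OF assms])
  also have "\<dots> = cf_err x (Suc (Suc k)) * (cf_cq x (Suc k) * cf_den x k)"
    by (simp add: cf_err_eq[OF assms, of "Suc k"])
  finally show ?thesis
    using cf_err_mult_den[OF assms, of "Suc k"] by (auto simp: mult_left_cancel)
qed

lemma mult_div_eq_div_minus:
  fixes s c d q q' :: real
  assumes "d = c * q + q'" "c \<noteq> 0" "d \<noteq> 0"
  shows "q * s / d = s / c - s * q' / (c * d)"
proof -
  have "q * s / d = (c * q) * s / (c * d)" using assms(2) by simp
  also have "\<dots> = (d - q') * s / (c * d)" using assms(1) by simp
  also have "\<dots> = s / c - s * q' / (c * d)" using assms(2,3) by (simp add: field_simps)
  finally show ?thesis .
qed

lemma abs_mult_err_eq:
  fixes e d c q q' s sg :: real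
  assumes "e * d = sg" "\<bar>sg\<bar> = 1" "d = c * q + q'" "1 < d" "0 < c" "1 \<le> q * s"
  shows "\<bar>(e + q * s) * e\<bar> = s / c - s * q' / (c * d) + sg / d\<^sup>2"
proof -
  have e: "e = sg / d" using assms(1,4) by (simp add: field_simps)
  with assms(2,4) have "\<bar>e\<bar> = 1 / d" "\<bar>e\<bar> < 1" by (simp_all add: abs_divide)
  with assms(6) have "\<bar>(e + q * s) * e\<bar> = (e + q * s) / d" by (simp add: abs_mult)
  also have "\<dots> = q * s / d + sg / d\<^sup>2" using e assms(4) by (simp add: field_simps power2_eq_square)
  also have "q * s / d = s / c - s * q' / (c * d)"
    using assms(3-5) by (intro mult_div_eq_div_minus) simp_all
  finally show ?thesis .
qed

lemma minus_div_add_div_less_div: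
  fixes s c d q' sg :: real
  assumes "0 < c" "0 < d" "sg * c < s * q' * d"
  shows "s / c - s * q' / (c * d) + sg / d\<^sup>2 < s / c"
proof -
  have "sg / d\<^sup>2 = sg * c / (c * d\<^sup>2)" using assms(1) by simp
  also have "\<dots> < s * q' * d / (c * d\<^sup>2)" using assms by (intro divide_strict_right_mono) simp_all
  also have "\<dots> = s * q' / (c * d)" using assms(2) by (simp add: power2_eq_square)
  finally show ?thesis by simp
qed

lemma div_mult_less_minus_div_add_div:
  fixes s c c' d d' q' q'' sg :: real
  assumes "d = c * d'" "d' = c' * q' + q''" "0 < c" "0 < c'" "0 < d'"
    and "- sg * c' < s * q'' * d'"
  shows "s / c * (1 - 1 / (c' * c)) < s / c - s * q' / (c * d) + sg / d\<^sup>2"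
proof -
  have "s / c - s * q' / (c * d) + sg / d\<^sup>2 - s / c * (1 - 1 / (c' * c))
      = (s * (d' - c' * q') * d' + sg * c') / (c' * c\<^sup>2 * d'\<^sup>2)"
    unfolding assms(1) using assms(3-5) by (simp add: field_simps power2_eq_square)
  also have "\<dots> = (s * q'' * d' + sg * c') / (c' * c\<^sup>2 * d'\<^sup>2)"
    using assms(2) by simp
  also have "\<dots> > 0" using assms(3-6) by simp
  finally show ?thesis by simp
qed

lemma cf_den_ge:
  assumes "x \<notin> \<rat>" "1 < x" "0 < k"
  shows "cf_cq x k + of_int (cf_Q x k) \<le> cf_den x k"
proof -
  have "cf_cq x k * 1 \<le> cf_cq x k * of_int (cf_Q x (Suc k))"
    using assms cf_cq_gt_one[OF assms(1,2), of k] cf_Q_ge_one[OF assms(1), of "Suc k"]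
    by (intro mult_left_mono) simp_all
  then show ?thesis by (simp add: cf_den_def)
qed

lemma cf_den_pos:
  assumes "x \<notin> \<rat>" "1 < x"
  shows "0 < cf_den x k"
proof (cases k)
  case (Suc m)
  then show ?thesis using cf_den_ge[OF assms, of k] cf_cq_gt_one[OF assms, of k]
    cf_Q_nonneg[OF assms(1), of k] by simp
qed (simp add: cf_den_def)

lemma le_mult_of_one_le:
  fixes a b d :: real
  assumes "1 \<le> a" "1 \<le> b" "0 \<le> d"
  shows "d \<le> a * b * d"
proof -
  have "1 * 1 \<le> a * b" using assms(1,2) by (intro mult_mono) simp_all
  then show ?thesis using assms(3) mult_right_mono[of 1 "a * b" d] by simp
qed

definition cf_conj_norm :: "real \<Rightarrow> real \<Rightarrow> nat \<Rightarrow> real" where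
  "cf_conj_norm x x' i = \<bar>(of_int (cf_p x i) - of_int (cf_q x i) * x') *
                           (of_int (cf_p x i) - of_int (cf_q x i) * x)\<bar>"

lemma cf_conj_norm_eq:
  assumes "x \<notin> \<rat>" "1 < x" "x' < 0"
  shows "cf_conj_norm x x' i =
           (x - x') / cf_cq x (Suc i)
         - (x - x') * of_int (cf_Q x (Suc i)) / (cf_cq x (Suc i) * cf_den x (Suc i))
         + (-1) ^ Suc i / (cf_den x (Suc i))\<^sup>2"
proof -
  define e where "e = cf_err x (Suc (Suc i))"
  have "cf_conj_norm x x' i = \<bar>(e + of_int (cf_q x i) * (x - x')) * e\<bar>"
    by (simp add: cf_conj_norm_def e_def cf_err_def algebra_simps)
  also have "\<dots> = (x - x') / cf_cq x (Suc i)
         - (x - x') * of_int (cf_Q x (Suc i)) / (cf_cq x (Suc i) * cf_den x (Suc i))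
         + (-1) ^ Suc i / (cf_den x (Suc i))\<^sup>2"
  proof (rule abs_mult_err_eq)
    show "e * cf_den x (Suc i) = (-1) ^ Suc i"
      unfolding e_def by (rule cf_err_mult_den[OF assms(1)])
    show "cf_den x (Suc i) = cf_cq x (Suc i) * of_int (cf_q x i) + of_int (cf_Q x (Suc i))"
      by (simp add: cf_den_def)
    show "1 < cf_den x (Suc i)"
      using cf_den_ge[OF assms(1,2), of "Suc i"] cf_cq_gt_one[OF assms(1,2), of "Suc i"]
        cf_Q_nonneg[OF assms(1), of "Suc i"] by simp
    show "0 < cf_cq x (Suc i)" by (rule cf_cq_pos[OF assms(1,2)])
    show "1 \<le> of_int (cf_q x i) * (x - x')"
      using le_mult_of_one_le[of "of_int (cf_q x i)" "x - x'" 1] cf_q_ge_one[OF assms(1), of i] assms(2,3)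
      by simp
  qed simp
  finally show ?thesis .
qed

lemma cf_conj_norm_less:
  assumes "x \<notin> \<rat>" "1 < x" "x' < 0"
  shows "cf_conj_norm x x' i < (x - x') / cf_cq x (Suc i)"
  unfolding cf_conj_norm_eq[OF assms]
proof (rule minus_div_add_div_less_div)
  let ?c = "cf_cq x (Suc i)" and ?d = "cf_den x (Suc i)" and ?q' = "real_of_int (cf_Q x (Suc i))"
  show "0 < ?c" by (rule cf_cq_pos[OF assms(1,2)])
  show "0 < ?d" by (rule cf_den_pos[OF assms(1,2)])
  show "(-1) ^ Suc i * ?c < (x - x') * ?q' * ?d"
  proof (cases "even i")
    case True
    have "0 \<le> (x - x') * ?q' * ?d"
      using assms \<open>0 < ?d\<close> cf_Q_nonneg[OF assms(1), of "Suc i"] by simp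
    with True \<open>0 < ?c\<close> show ?thesis by simp
  next
    case False
    then have "1 \<le> ?q'" using cf_Q_ge_one[OF assms(1), of "Suc i"] by (cases i) simp_all
    then have "?c < ?d" using cf_den_ge[OF assms(1,2), of "Suc i"] by simp
    also have "?d \<le> (x - x') * ?q' * ?d"
      using \<open>1 \<le> ?q'\<close> \<open>0 < ?d\<close> assms(2,3) by (intro le_mult_of_one_le) simp_all
    finally show ?thesis using False by simp
  qed
qed

lemma cf_conj_norm_greater:
  assumes "x \<notin> \<rat>" "1 < x" "x' < 0"
  shows "(x - x') / cf_cq x (Suc i) * (1 - 1 / (cf_cq x i * cf_cq x (Suc i))) < cf_conj_norm x x' i"
  unfolding cf_conj_norm_eq[OF assms]
proof (rule div_mult_less_minus_div_add_div)
  let ?c' = "cf_cq x i" and ?d' = "cf_den x i" and ?q'' = "real_of_int (cf_Q x i)"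
  show "cf_den x (Suc i) = cf_cq x (Suc i) * ?d'" by (rule cf_den_Suc[OF assms(1)])
  show "?d' = ?c' * of_int (cf_Q x (Suc i)) + ?q''" by (simp add: cf_den_def)
  show "0 < cf_cq x (Suc i)" "0 < ?c'" by (rule cf_cq_pos[OF assms(1,2)])+
  show "0 < ?d'" by (rule cf_den_pos[OF assms(1,2)])
  show "- ((-1) ^ Suc i) * ?c' < (x - x') * ?q'' * ?d'"
  proof (cases "even i")
    case True
    have "?c' < (x - x') * ?q'' * ?d'"
    proof (cases i)
      case 0
      then show ?thesis using assms(3) by (simp add: cf_den_def)
    next
      case (Suc j)
      with True have "1 \<le> ?q''" using cf_Q_ge_one[OF assms(1), of i] by (simp add: odd_pos)
      then have "?c' < ?d'" using cf_den_ge[OF assms(1,2), of i] Suc by simp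
      also have "?d' \<le> (x - x') * ?q'' * ?d'"
        using \<open>1 \<le> ?q''\<close> \<open>0 < ?d'\<close> assms(2,3) by (intro le_mult_of_one_le) simp_all
      finally show ?thesis .
    qed
    with True show ?thesis by simp
  next
    case False
    have "0 \<le> (x - x') * ?q'' * ?d'"
      using assms \<open>0 < ?d'\<close> cf_Q_nonneg[OF assms(1), of i] by simp
    with False \<open>0 < ?c'\<close> show ?thesis by simp
  qed
qed

lemma div_less_inverse_of_less:
  fixes u c s N :: real
  assumes "0 < u" "u \<le> c" "0 < s" "N < s / c"
  shows "N / s < 1 / u"
proof -
  have "N / s < 1 / c" using assms by (simp add: field_simps)
  also have "\<dots> \<le> 1 / u" using assms(1,2) by (simp add: frac_le)
  finally show ?thesis .
qed

lemma inverse_add_ten_less_div: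
  fixes u c c' s N :: real
  assumes "3 \<le> u" "u \<le> c" "c < u + 1" "1 < c'" "0 < s" "s / c * (1 - 1 / (c' * c)) < N"
  shows "1 / (u + 10) < N / s"
proof -
  have "c\<^sup>2 < c * (u + 1)" using assms(1-3) by (simp add: power2_eq_square)
  then have "c\<^sup>2 \<le> (c - 1) * (u + 10)" using assms(1,2) by (simp add: algebra_simps)
  then have "1 / (u + 10) \<le> 1 / c * (1 - 1 / c)"
    using assms(1,2) by (simp add: field_simps power2_eq_square)
  also have "\<dots> < 1 / c * (1 - 1 / (c' * c))"
    using assms(1,2,4) by (simp add: field_simps)
  also have "\<dots> < N / s" using assms(5,6) by (simp add: field_simps)
  finally show ?thesis .
qed

lemma sqrt_of_squarefree_not_Rats:
  fixes D :: int
  assumes "1 < D" "squarefree D"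
  shows "sqrt (of_int D) \<notin> \<rat>"
proof
  assume "sqrt (of_int D) \<in> \<rat>"
  then obtain a b :: int where b: "0 < b" "coprime a b" and ab: "sqrt (of_int D) = of_int a / of_int b"
    by (rule Rats_cases')
  have "of_int D = (of_int a / of_int b :: real)\<^sup>2" using assms(1) ab[symmetric] by simp
  then have D: "D * b\<^sup>2 = a\<^sup>2"
    using b(1) by (simp add: field_simps flip: of_int_power of_int_mult of_int_eq_iff)
  then have "b\<^sup>2 dvd a\<^sup>2" by (metis dvd_triv_right)
  moreover have "coprime (a\<^sup>2) (b\<^sup>2)" using b(2) by simp
  ultimately have "is_unit (b\<^sup>2)" by (meson coprime_common_divisor dvd_refl)
  with b(1) have "b = 1" by (auto simp: power2_eq_1_iff)
  with D have "a\<^sup>2 dvd D" by simp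
  with assms(2) have "is_unit a" by (rule squarefreeD)
  then have "a\<^sup>2 = 1" by (metis zdvd1_eq power2_abs power_one)
  with D \<open>b = 1\<close> assms(1) show False by simp
qed

lemma omegaD_not_Rats:
  assumes "1 < D" "squarefree D"
  shows "omegaD D \<notin> \<rat>"
proof
  assume "omegaD D \<in> \<rat>"
  moreover have "sqrt (of_int D) = (if D mod 4 = 1 then 2 * omegaD D - 1 else omegaD D)"
    by (simp add: omegaD_def field_simps)
  ultimately have "sqrt (of_int D) \<in> \<rat>" by simp
  with sqrt_of_squarefree_not_Rats[OF assms] show False ..
qed

lemma one_less_omegaD: "1 < D \<Longrightarrow> 1 < omegaD D"
  by (simp add: omegaD_def)

lemma omegaD_conj_neg: "1 < D \<Longrightarrow> omegaD_conj D < 0"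
  by (simp add: omegaD_conj_def)

lemma omegaD_minus_conj: "omegaD D - omegaD_conj D = sqrt (of_int (disc D))"
  by (simp add: omegaD_def omegaD_conj_def disc_def real_sqrt_mult field_simps)

lemma normN_eq_cf_conj_norm: "normN D i = cf_conj_norm (omegaD D) (omegaD_conj D) i"
  by (simp add: normN_def cf_conj_norm_def)

theorem lemma5:
  fixes D :: int and i :: nat
  assumes "D > 1" and "squarefree D"
  defines "c \<equiv> cf_cq (omegaD D)" and "u \<equiv> cf_u (omegaD D)"
  shows "sqrt (real_of_int (disc D)) / c (i+1) * (1 - 1 / (c i * c (i+1))) < normN D i
         \<and> normN D i < sqrt (real_of_int (disc D)) / c (i+1)
         \<and> normN D i / sqrt (real_of_int (disc D)) < 1 / real_of_int (u (i+1))
         \<and> (u (i+1) \<ge> 3 \<longrightarrow> 1 / (real_of_int (u (i+1)) + 10) < normN D i / sqrt (real_of_int (disc D)))"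
proof -
  let ?x = "omegaD D" and ?s = "sqrt (real_of_int (disc D))"
  have x: "?x \<notin> \<rat>" "1 < ?x" "omegaD_conj D < 0"
    using assms(1,2) by (simp_all add: omegaD_not_Rats one_less_omegaD omegaD_conj_neg)
  have s: "?s = ?x - omegaD_conj D" by (simp add: omegaD_minus_conj)
  have lower: "?s / c (i+1) * (1 - 1 / (c i * c (i+1))) < normN D i"
    and upper: "normN D i < ?s / c (i+1)"
    unfolding s normN_eq_cf_conj_norm c_def
    using cf_conj_norm_greater[OF x] cf_conj_norm_less[OF x] by simp_all
  have "real_of_int (u (i+1)) \<le> c (i+1)" "c (i+1) < real_of_int (u (i+1)) + 1"
    unfolding c_def u_def cf_u_def by linarith+
  moreover have "1 \<le> u (i+1)" "1 < c i"
    using cf_u_Suc_ge_one[OF x(1)] cf_cq_gt_one[OF x(1,2)] by (simp_all add: u_def c_def)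
  moreover have "0 < ?s" using x s by simp
  ultimately show ?thesis
    using lower upper div_less_inverse_of_less inverse_add_ten_less_div by simp
qed

end
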